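(* Let $k$ be an odd positive integer, $s>0$ an integer and $t$ an integer. Then $$\eta_{k}(t;s)=\frac{1}{2}\sum_{j=0}^{k-1}(-1)^{j}\,\eta_{k}(t-js;s+1).$$
   Context: For positive integers $k,s$ and integer $t$, $\eta_{k}(t;s)=\frac{1}{k}\sum_{j=0}^{k-1}(1+\alpha^{j})(1+\alpha^{2j})\cdots (1+\alpha^{(s-1)j})\,\alpha^{-jt}$, where $\alpha=e^{2\pi i/k}$ (the empty product for $s=1$ equals $1$). *)

theory Defs
  imports "HOL-Analysis.Analysis"
begin

definition eta :: "nat \<Rightarrow> int \<Rightarrow> nat \<Rightarrow> complex" where
  "eta k t s = (let \<alpha> = exp (2 * pi * \<i> / of_nat k) in
     (1 / of_nat k) * (\<Sum>j = 0..<k. (\<Prod>i = 1..<s. (1 + \<alpha> ^ (i * j))) * \<alpha> powi (- (int j * t))))"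

end

theory Submission
  imports Defs
begin

text \<open>Write \<open>\<alpha> = exp (2\<pi>i/k)\<close>. The \<open>j\<close>-th summand of \<open>\<eta>\<^sub>k(t - ms; s + 1)\<close> is the
  \<open>j\<close>-th summand of \<open>\<eta>\<^sub>k(t; s)\<close> times \<open>(1 + \<beta>) \<beta>\<^sup>m\<close>, where \<open>\<beta> = \<alpha>\<^sup>s\<^sup>j\<close> is a \<open>k\<close>-th
  root of unity. Since \<open>k\<close> is odd, \<open>(-\<beta>)\<^sup>k = -1\<close>, so the geometric sum gives
  \<open>(1 + \<beta>) \<Sum>\<^sub>m\<^sub><\<^sub>k (-\<beta>)\<^sup>m = 1 - (-\<beta>)\<^sup>k = 2\<close>; summing over \<open>m\<close> first therefore
  recovers every summand of \<open>\<eta>\<^sub>k(t; s)\<close> exactly twice.\<close>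

lemma alternating_geometric_sum_odd_root_of_unity:
  fixes \<beta> :: "'a :: comm_ring_1"
  assumes "odd k" and "\<beta> ^ k = 1"
  shows "(1 + \<beta>) * (\<Sum>m<k. (-1) ^ m * \<beta> ^ m) = 2"
proof -
  have "(1 + \<beta>) * (\<Sum>m<k. (-1) ^ m * \<beta> ^ m) = (1 - (-\<beta>)) * (\<Sum>m<k. (-\<beta>) ^ m)"
    by (simp add: power_minus')
  also have "\<dots> = 1 - (-\<beta>) ^ k"
    by (rule one_diff_power_eq[symmetric])
  also have "\<dots> = 2"
    using assms by (simp add: power_minus_odd)
  finally show ?thesis .
qed

lemma alternating_sum_over_roots_of_unity:
  fixes \<beta> c :: "'b \<Rightarrow> 'a :: field_char_0"
  assumes "odd k" and "\<And>j. j \<in> J \<Longrightarrow> \<beta> j ^ k = 1"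
  shows "(1/2) * (\<Sum>m<k. (-1) ^ m * (\<Sum>j\<in>J. c j * (1 + \<beta> j) * \<beta> j ^ m)) = (\<Sum>j\<in>J. c j)"
proof -
  have "(\<Sum>m<k. (-1) ^ m * (\<Sum>j\<in>J. c j * (1 + \<beta> j) * \<beta> j ^ m))
      = (\<Sum>j\<in>J. c j * ((1 + \<beta> j) * (\<Sum>m<k. (-1) ^ m * \<beta> j ^ m)))"
    by (simp add: sum_distrib_left sum_distrib_right mult_ac sum.swap[of _ "{..<k}"])
  also have "\<dots> = (\<Sum>j\<in>J. 2 * c j)"
    using assms by (simp add: alternating_geometric_sum_odd_root_of_unity mult.commute)
  finally show ?thesis
    by (simp add: sum_distrib_left)
qed

lemma exp_two_pi_i_div_power_eq_1:
  assumes "k > 0"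
  shows "exp (2 * pi * \<i> / of_nat k) ^ k = 1"
proof -
  have "exp (2 * pi * \<i> / of_nat k) ^ k = exp (of_nat k * (2 * pi * \<i> / of_nat k))"
    by (rule exp_of_nat_mult[symmetric])
  also have "\<dots> = 1"
    using assms by simp
  finally show ?thesis .
qed

lemma power_int_shift:
  fixes \<alpha> :: "'a :: field"
  assumes "\<alpha> \<noteq> 0"
  shows "\<alpha> powi (- (int j * (t - int m * int s))) = \<alpha> powi (- (int j * t)) * (\<alpha> ^ (s * j)) ^ m"
proof -
  have "- (int j * (t - int m * int s)) = - (int j * t) + int (s * j * m)"
    by (simp add: algebra_simps)
  then have "\<alpha> powi (- (int j * (t - int m * int s))) = \<alpha> powi (- (int j * t) + int (s * j * m))"
    by (rule arg_cong)
  also have "\<dots> = \<alpha> powi (- (int j * t)) * \<alpha> powi int (s * j * m)"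
    using assms by (rule power_int_add[OF disjI1])
  finally show ?thesis
    by (simp only: power_int_of_nat power_mult)
qed

theorem theorem3p6:
  fixes k s :: nat and t :: int
  assumes "odd k" and "k > 0" and "s > 0"
  shows "eta k t s = (1/2) * (\<Sum>j = 0..<k. (-1) ^ j * eta k (t - int j * int s) (s + 1))"
proof -
  define \<alpha> where "\<alpha> = exp (2 * pi * \<i> / of_nat k)"
  define c where "c j = (\<Prod>i = 1..<s. 1 + \<alpha> ^ (i * j)) * \<alpha> powi (- (int j * t))" for j
  have \<alpha>_nonzero: "\<alpha> \<noteq> 0"
    unfolding \<alpha>_def by simp
  have root: "(\<alpha> ^ (s * j)) ^ k = 1" for j
    using exp_two_pi_i_div_power_eq_1[OF \<open>k > 0\<close>]
    by (metis \<alpha>_def mult.commute power_mult power_one)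
  have shifted: "eta k (t - int m * int s) (s + 1)
      = (1 / of_nat k) * (\<Sum>j<k. c j * (1 + \<alpha> ^ (s * j)) * (\<alpha> ^ (s * j)) ^ m)" for m
    unfolding eta_def Let_def \<alpha>_def[symmetric] using \<open>s > 0\<close>
    by (simp add: c_def atLeast0LessThan power_int_shift[OF \<alpha>_nonzero]
        prod.atLeastLessThan_Suc mult_ac)
  have "(1/2) * (\<Sum>m = 0..<k. (-1) ^ m * eta k (t - int m * int s) (s + 1))
      = (1 / of_nat k) * ((1/2) * (\<Sum>m<k. (-1) ^ m * (\<Sum>j<k. c j * (1 + \<alpha> ^ (s * j)) * (\<alpha> ^ (s * j)) ^ m)))"
    unfolding shifted by (simp add: atLeast0LessThan sum_distrib_left mult_ac)
  also have "\<dots> = (1 / of_nat k) * (\<Sum>j<k. c j)"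
    using alternating_sum_over_roots_of_unity[OF \<open>odd k\<close>, where \<beta> = "\<lambda>j. \<alpha> ^ (s * j)"] root
    by (simp only:)
  also have "\<dots> = eta k t s"
    unfolding eta_def Let_def \<alpha>_def[symmetric] by (simp add: c_def atLeast0LessThan)
  finally show ?thesis ..
qed

end
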